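(* Let $\omega\in(0,\pi/2]$ and let $S$ be a monotone sofa with rotation angle $\omega$. Then $\mathcal{M}(S)=S$.
   Context: For $t\in\mathbb{R}$ put $u_t=(\cos t,\sin t)$, $v_t=(-\sin t,\cos t)$; $R_t$ is counterclockwise rotation about the origin by $t$. For nonempty compact $X$, $p_X(t)=\max_{p\in X}p\cdot u_t$. The hallway is $L=L_H\cup L_V$, $L_H=(-\infty,1]\times[0,1]$, $L_V=[0,1]\times(-\infty,1]$. A moving sofa is a connected, nonempty, compact $S\subset\mathbb{R}^2$ such that some translate of $S$ lies in $L_H$ and can be moved by a continuous rigid motion inside $L$ to a subset of $L_V$; its rotation angle $\omega\in(0,\pi/2]$ is the total clockwise angle rotated (fixed data of the sofa). It is in standard position if $p_S(\omega)=p_S(\pi/2)=1$. Let $H=\mathbb{R}\times[0,1]$, $V=[0,1]\times\mathbb{R}$, $P_\omega=H\cap R_\omega(V)$, $L_X(t)=R_t(L)+(p_X(t)-1)u_t+(p_X(t+\pi/2)-1)v_t$. For a moving sofa $S'$ with rotation angle $\omega$ in standard position, $\mathcal{M}(S')=P_\omega\cap\bigcap_{0\le t\le\omega}L_{S'}(t)$. A monotone sofa with rotation angle $\omega$ is a set $\mathcal{M}(S')$ for such an $S'$; it is itself a moving sofa with rotation angle $\omega$ in standard position, so $\mathcal{M}(S)$ is defined for it. *)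

theory Defs
  imports "HOL-Analysis.Analysis"
begin

type_synonym pt = "real \<times> real"

definition uvec :: "real \<Rightarrow> pt" where "uvec t = (cos t, sin t)"
definition vvec :: "real \<Rightarrow> pt" where "vvec t = (- sin t, cos t)"

definition rot :: "real \<Rightarrow> pt \<Rightarrow> pt" where
  "rot t p = (fst p * cos t - snd p * sin t, fst p * sin t + snd p * cos t)"

definition supp :: "pt set \<Rightarrow> real \<Rightarrow> real" where
  "supp X t = Sup ((\<lambda>p. p \<bullet> uvec t) ` X)"

definition LH :: "pt set" where "LH = {p. fst p \<le> 1 \<and> 0 \<le> snd p \<and> snd p \<le> 1}"
definition LV :: "pt set" where "LV = {p. 0 \<le> fst p \<and> fst p \<le> 1 \<and> snd p \<le> 1}"
definition hallway :: "pt set" where "hallway = LH \<union> LV"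

definition Hstrip :: "pt set" where "Hstrip = {p. 0 \<le> snd p \<and> snd p \<le> 1}"
definition Vstrip :: "pt set" where "Vstrip = {p. 0 \<le> fst p \<and> fst p \<le> 1}"

definition moving_sofa :: "pt set \<Rightarrow> real \<Rightarrow> bool" where
  "moving_sofa S \<omega> \<longleftrightarrow> connected S \<and> S \<noteq> {} \<and> compact S \<and> 0 < \<omega> \<and> \<omega> \<le> pi / 2 \<and>
     (\<exists>\<theta> :: real \<Rightarrow> real. \<exists>x :: real \<Rightarrow> pt.
        continuous_on {0..1} \<theta> \<and> continuous_on {0..1} x \<and>
        \<theta> 0 = 0 \<and> \<theta> 1 = \<omega> \<and>
        (\<forall>s\<in>{0..1}. (\<lambda>p. rot (- \<theta> s) p + x s) ` S \<subseteq> hallway) \<and>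
        (\<lambda>p. p + x 0) ` S \<subseteq> LH \<and>
        (\<lambda>p. rot (- \<omega>) p + x 1) ` S \<subseteq> LV)"

definition standard_position :: "pt set \<Rightarrow> real \<Rightarrow> bool" where
  "standard_position S \<omega> \<longleftrightarrow> supp S \<omega> = 1 \<and> supp S (pi / 2) = 1"

definition P_set :: "real \<Rightarrow> pt set" where
  "P_set \<omega> = Hstrip \<inter> rot \<omega> ` Vstrip"

definition L_X :: "pt set \<Rightarrow> real \<Rightarrow> pt set" where
  "L_X X t = (\<lambda>q. rot t q + (supp X t - 1) *\<^sub>R uvec t + (supp X (t + pi / 2) - 1) *\<^sub>R vvec t)
               ` hallway"

definition M_op :: "real \<Rightarrow> pt set \<Rightarrow> pt set" where
  "M_op \<omega> S' = P_set \<omega> \<inter> (\<Inter>t\<in>{0..\<omega>}. L_X S' t)"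

definition monotone_sofa :: "pt set \<Rightarrow> real \<Rightarrow> bool" where
  "monotone_sofa S \<omega> \<longleftrightarrow>
     (\<exists>S'. moving_sofa S' \<omega> \<and> standard_position S' \<omega> \<and> S = M_op \<omega> S')"

end

theory Submission
  imports Defs
begin

text \<open>A moving sofa S' in standard position lies in P_\<omega> and, for every t, in the hallway
  L_S'(t) that its own support function places against it; hence S' \<subseteq> M(S') = S.
  Conversely S \<subseteq> L_S'(t) bounds the support function of S by that of S' in the directions t and
  t + \<pi>/2, so together with S' \<subseteq> S the two support functions agree there. Thus L_S(t) = L_S'(t)
  for all t and M(S) = M(S') = S.\<close>

lemma inner_uvec: "p \<bullet> uvec t = fst p * cos t + snd p * sin t"
  by (cases p) (simp add: uvec_def)

lemma inner_vvec: "p \<bullet> vvec t = - fst p * sin t + snd p * cos t"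
  by (cases p) (simp add: vvec_def)

lemma uvec_add_pi_half: "uvec (t + pi / 2) = vvec t"
  by (simp add: uvec_def vvec_def cos_add sin_add)

lemma uvec_pi_half: "uvec (pi / 2) = (0, 1)"
  by (simp add: uvec_def)

lemma rot_minus_eq_inner: "rot (- t) p = (p \<bullet> uvec t, p \<bullet> vvec t)"
  by (simp add: rot_def inner_uvec inner_vvec algebra_simps)

lemma rot_rot: "rot a (rot b p) = rot (a + b) p"
  by (simp add: rot_def cos_add sin_add algebra_simps)

lemma rot_zero: "rot 0 p = p"
  by (simp add: rot_def)

lemma rot_minus_rot [simp]: "rot (- t) (rot t p) = p" "rot t (rot (- t) p) = p"
  by (simp_all add: rot_rot rot_zero)

lemma inner_uvec_vvec_orthonormal [simp]:
  "uvec t \<bullet> uvec t = 1" "vvec t \<bullet> vvec t = 1" "uvec t \<bullet> vvec t = 0" "vvec t \<bullet> uvec t = 0"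
  by (simp_all add: inner_uvec inner_vvec uvec_def vvec_def power2_eq_square[symmetric])

lemma mem_L_X_iff:
  "p \<in> L_X X t \<longleftrightarrow>
     (p \<bullet> uvec t - (supp X t - 1), p \<bullet> vvec t - (supp X (t + pi / 2) - 1)) \<in> hallway"
proof -
  define w where "w = (supp X t - 1) *\<^sub>R uvec t + (supp X (t + pi / 2) - 1) *\<^sub>R vvec t"
  have "L_X X t = (\<lambda>q. rot t q + w) ` hallway"
    by (simp add: L_X_def w_def add.assoc)
  also have "\<dots> = (\<lambda>p. rot (- t) (p - w)) -` hallway"
    by (force intro: image_eqI[where x = "rot (- t) (_ - w)"])
  finally show ?thesis
    by (simp add: rot_minus_eq_inner w_def inner_diff_left inner_add_left)
qed

lemma hallway_le_one: "(x, y) \<in> hallway \<Longrightarrow> x \<le> 1 \<and> y \<le> 1"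
  by (auto simp: hallway_def LH_def LV_def)

lemma hallway_shift:
  "(x, y) \<in> hallway \<Longrightarrow> 0 \<le> a \<Longrightarrow> 0 \<le> b \<Longrightarrow> x + a \<le> 1 \<Longrightarrow> y + b \<le> 1 \<Longrightarrow>
     (x + a, y + b) \<in> hallway"
  by (auto simp: hallway_def LH_def LV_def)

lemma supp_upper: "bdd_above ((\<lambda>p. p \<bullet> uvec t) ` X) \<Longrightarrow> p \<in> X \<Longrightarrow> p \<bullet> uvec t \<le> supp X t"
  unfolding supp_def by (rule cSup_upper) auto

lemma bdd_above_inner_compact: "compact X \<Longrightarrow> bdd_above ((\<lambda>p. p \<bullet> v) ` X)"
  by (intro bounded_imp_bdd_above compact_imp_bounded compact_continuous_image)
     (auto intro!: continuous_intros)

lemma supp_upper_compact: "compact X \<Longrightarrow> p \<in> X \<Longrightarrow> p \<bullet> uvec t \<le> supp X t"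
  by (rule supp_upper[OF bdd_above_inner_compact])

lemma supp_least: "X \<noteq> {} \<Longrightarrow> (\<And>p. p \<in> X \<Longrightarrow> p \<bullet> uvec t \<le> c) \<Longrightarrow> supp X t \<le> c"
  unfolding supp_def by (rule cSup_least) auto

lemma supp_eq_of_subset_of_le:
  assumes "Y \<subseteq> X" "Y \<noteq> {}" and le: "\<And>p. p \<in> X \<Longrightarrow> p \<bullet> uvec t \<le> supp Y t"
  shows "supp X t = supp Y t"
proof (rule antisym)
  show "supp X t \<le> supp Y t"
    using assms by (intro supp_least) auto
  have "bdd_above ((\<lambda>p. p \<bullet> uvec t) ` X)"
    unfolding bdd_above_def using le by blast
  then show "supp Y t \<le> supp X t"
    unfolding supp_def using assms(1,2) by (intro cSup_subset_mono) auto
qed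

lemma L_X_eq_of_subset_L_X:
  assumes "Y \<subseteq> X" "Y \<noteq> {}" and X_sub: "X \<subseteq> L_X Y t"
  shows "L_X X t = L_X Y t"
proof -
  have bounds: "p \<bullet> uvec t \<le> supp Y t \<and> p \<bullet> vvec t \<le> supp Y (t + pi / 2)" if "p \<in> X" for p
    using hallway_le_one X_sub that mem_L_X_iff by fastforce
  have "supp X t = supp Y t"
    by (rule supp_eq_of_subset_of_le[OF assms(1,2)]) (use bounds in blast)
  moreover have "supp X (t + pi / 2) = supp Y (t + pi / 2)"
    by (rule supp_eq_of_subset_of_le[OF assms(1,2)]) (use bounds in \<open>simp add: uvec_add_pi_half\<close>)
  ultimately show ?thesis
    unfolding L_X_def by simp
qed

lemma moving_sofa_subset_L_X:
  assumes ms: "moving_sofa S \<omega>" and t: "t \<in> {0..\<omega>}"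
  shows "S \<subseteq> L_X S t"
proof
  fix p assume p: "p \<in> S"
  from ms have cp: "compact S" and ne: "S \<noteq> {}"
    unfolding moving_sofa_def by simp_all
  from ms obtain \<theta> :: "real \<Rightarrow> real" and x :: "real \<Rightarrow> pt"
    where "continuous_on {0..1} \<theta>" "\<theta> 0 = 0" "\<theta> 1 = \<omega>"
      and in_hallway: "\<forall>s\<in>{0..1}. (\<lambda>p. rot (- \<theta> s) p + x s) ` S \<subseteq> hallway"
    unfolding moving_sofa_def by blast
  then obtain s where s: "s \<in> {0..1}" "\<theta> s = t"
    using IVT'[of \<theta> 0 t 1] t by auto
  have moved: "(q \<bullet> uvec t + fst (x s), q \<bullet> vvec t + snd (x s)) \<in> hallway" if "q \<in> S" for q
    using in_hallway s that by (force simp: rot_minus_eq_inner plus_prod_def)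
  define A where "A = supp S t"
  define B where "B = supp S (t + pi / 2)"
  have A: "A \<le> 1 - fst (x s)"
    unfolding A_def using ne by (rule supp_least) (use hallway_le_one moved in force)
  have B: "B \<le> 1 - snd (x s)"
    unfolding B_def using ne
    by (rule supp_least) (use hallway_le_one moved in \<open>force simp: uvec_add_pi_half\<close>)
  have "p \<bullet> uvec t \<le> A" "p \<bullet> vvec t \<le> B"
    using supp_upper_compact[OF cp p, of t] supp_upper_compact[OF cp p, of "t + pi / 2"]
    by (simp_all add: A_def B_def uvec_add_pi_half)
  \<comment> \<open>push the sofa at time s outwards until it touches both outer walls of the hallway\<close>
  with A B have "(p \<bullet> uvec t + fst (x s) + (1 - A - fst (x s)),
                  p \<bullet> vvec t + snd (x s) + (1 - B - snd (x s))) \<in> hallway"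
    by (intro hallway_shift moved p) auto
  then show "p \<in> L_X S t"
    unfolding mem_L_X_iff A_def B_def by (simp add: algebra_simps)
qed

lemma moving_sofa_subset_P_set:
  assumes ms: "moving_sofa S \<omega>" and sp: "standard_position S \<omega>"
  shows "S \<subseteq> P_set \<omega>"
proof
  fix p assume p: "p \<in> S"
  from ms have cp: "compact S" and ne: "S \<noteq> {}"
    unfolding moving_sofa_def by simp_all
  from ms obtain x :: "real \<Rightarrow> pt"
    where start: "(\<lambda>p. p + x 0) ` S \<subseteq> LH" and finish: "(\<lambda>p. rot (- \<omega>) p + x 1) ` S \<subseteq> LV"
    unfolding moving_sofa_def by blast
  have inner_pi_half: "q \<bullet> uvec (pi / 2) = snd q" for q
    by (cases q) (simp add: uvec_pi_half)
  have y_bounds: "0 \<le> snd q + snd (x 0) \<and> snd q + snd (x 0) \<le> 1" if "q \<in> S" for q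
    using start that by (cases "x 0") (auto simp: LH_def)
  have u_bounds: "0 \<le> q \<bullet> uvec \<omega> + fst (x 1) \<and> q \<bullet> uvec \<omega> + fst (x 1) \<le> 1" if "q \<in> S" for q
  proof -
    have "rot (- \<omega>) q + x 1 \<in> LV"
      using finish that by blast
    then show ?thesis
      by (cases "x 1") (simp add: rot_minus_eq_inner LV_def)
  qed
  have "supp S (pi / 2) \<le> 1 - snd (x 0)"
    using ne by (rule supp_least) (use y_bounds in \<open>fastforce simp: inner_pi_half\<close>)
  then have x0: "snd (x 0) \<le> 0"
    using sp by (simp add: standard_position_def)
  have "supp S \<omega> \<le> 1 - fst (x 1)"
    using ne by (rule supp_least) (use u_bounds in fastforce)
  then have x1: "fst (x 1) \<le> 0"
    using sp by (simp add: standard_position_def)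
  have "snd p \<le> 1" "p \<bullet> uvec \<omega> \<le> 1"
    using supp_upper_compact[OF cp p, of "pi / 2"] supp_upper_compact[OF cp p, of \<omega>] sp
    by (simp_all add: standard_position_def inner_pi_half)
  with x0 x1 y_bounds[OF p] u_bounds[OF p] have "p \<in> Hstrip" "rot (- \<omega>) p \<in> Vstrip"
    by (simp_all add: Hstrip_def Vstrip_def rot_minus_eq_inner)
  then show "p \<in> P_set \<omega>"
    unfolding P_set_def by (auto intro: image_eqI[where x = "rot (- \<omega>) p"])
qed

lemma moving_sofa_subset_M_op:
  "moving_sofa S \<omega> \<Longrightarrow> standard_position S \<omega> \<Longrightarrow> S \<subseteq> M_op \<omega> S"
  unfolding M_op_def using moving_sofa_subset_P_set moving_sofa_subset_L_X by blast

lemma M_op_M_op: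
  assumes ms: "moving_sofa S \<omega>" and sp: "standard_position S \<omega>"
  shows "M_op \<omega> (M_op \<omega> S) = M_op \<omega> S"
proof -
  have "S \<noteq> {}"
    using ms unfolding moving_sofa_def by simp
  moreover have "S \<subseteq> M_op \<omega> S"
    using ms sp by (rule moving_sofa_subset_M_op)
  moreover have "M_op \<omega> S \<subseteq> L_X S t" if "t \<in> {0..\<omega>}" for t
    using that unfolding M_op_def by blast
  ultimately have L_eq: "L_X (M_op \<omega> S) t = L_X S t" if "t \<in> {0..\<omega>}" for t
    using that by (simp add: L_X_eq_of_subset_L_X)
  have "M_op \<omega> (M_op \<omega> S) = P_set \<omega> \<inter> (\<Inter>t\<in>{0..\<omega>}. L_X (M_op \<omega> S) t)"
    by (rule M_op_def)
  also have "\<dots> = P_set \<omega> \<inter> (\<Inter>t\<in>{0..\<omega>}. L_X S t)"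
    using L_eq by simp
  also have "\<dots> = M_op \<omega> S"
    by (rule M_op_def[symmetric])
  finally show ?thesis .
qed

theorem theorem3p15:
  fixes S :: "(real \<times> real) set" and \<omega> :: real
  assumes "0 < \<omega>" and "\<omega> \<le> pi / 2"
    and "monotone_sofa S \<omega>"
  shows "M_op \<omega> S = S"
proof -
  obtain S' where "moving_sofa S' \<omega>" "standard_position S' \<omega>" "S = M_op \<omega> S'"
    using assms(3) unfolding monotone_sofa_def by blast
  then show ?thesis
    by (simp add: M_op_M_op)
qed

end
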